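(* For any integer $g\ge 0$, \[\sum_{S\in\mathcal{B}(g)}t_2(S)\le F_{g+4},\] where $F_n$ is the $n$-th Fibonacci number ($F_1=F_2=1$, $F_{n+2}=F_{n+1}+F_n$).
   Context: A numerical semigroup $S$ is a submonoid of $\mathbb{N}_0$ with finite complement $\mathcal{H}(S)$; its genus is $|\mathcal{H}(S)|$, $m=m(S)$ its smallest nonzero element and $F=F(S)=\max\mathcal{H}(S)$. The type $t(S)$ is the number of $P\in\mathcal{H}(S)$ with $P+s\in S$ for all $s\in S\setminus\{0\}$. Define $t_1(S)=\#(\mathcal{H}(S)\cap[F-m+1,F])$ and $t_2(S)=t(S)-t_1(S)$. $\mathcal{B}(g)$ is the set of numerical semigroups $S$ of genus $g$ with $F(S)<2m(S)$. *)

theory Defs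
  imports Main "HOL-Number_Theory.Fib"
begin

definition numerical_semigroup :: "nat set \<Rightarrow> bool" where
  "numerical_semigroup S \<longleftrightarrow> 0 \<in> S \<and> (\<forall>a\<in>S. \<forall>b\<in>S. a + b \<in> S) \<and> finite (UNIV - S)"

definition gaps :: "nat set \<Rightarrow> nat set" where
  "gaps S = UNIV - S"

definition genus :: "nat set \<Rightarrow> nat" where
  "genus S = card (gaps S)"

definition multiplicity_ns :: "nat set \<Rightarrow> nat" where
  "multiplicity_ns S = (LEAST s. s \<in> S \<and> s \<noteq> 0)"

definition frobenius :: "nat set \<Rightarrow> int" where
  "frobenius S = (if gaps S = {} then -1 else int (Max (gaps S)))"

definition pseudo_frobenius :: "nat set \<Rightarrow> nat set" where
  "pseudo_frobenius S = {P \<in> gaps S. \<forall>s\<in>S. s \<noteq> 0 \<longrightarrow> P + s \<in> S}"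

definition type_ns :: "nat set \<Rightarrow> nat" where
  "type_ns S = card (pseudo_frobenius S)"

definition t1 :: "nat set \<Rightarrow> nat" where
  "t1 S = card {h \<in> gaps S. frobenius S - int (multiplicity_ns S) + 1 \<le> int h \<and> int h \<le> frobenius S}"

definition t2 :: "nat set \<Rightarrow> int" where
  "t2 S = int (type_ns S) - int (t1 S)"

definition B_set :: "nat \<Rightarrow> nat set set" where
  "B_set g = {S. numerical_semigroup S \<and> genus S = g \<and> frobenius S < 2 * int (multiplicity_ns S)}"

end

theory Submission
  imports Defs
begin

(* Since t1 counts the gaps in [F - m + 1, F], t2 S is at most the number of pseudo-Frobenius
   numbers P <= F - m. Such a P forces m < F, and then S in B(g) is determined by g and by its
   window w i = (m + i : S), 1 <= i <= n = F - m - 1, where n + 2 <= m because F < 2m.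
   The shift P satisfies w P, not w (n + 1 - P) and w i ==> w (i + P), so the pairs
   (w i, w (i + P)) are never (True, False). Listing these pairs, ended by the marker
   [True, False], followed by the window positions not yet covered, encodes (S, P) injectively
   as a binary word of weight (True counts 1, False counts 2) at most g + 1, and there are
   fib (K + 3) - 1 words of weight at most K. *)

section \<open>Binary words of bounded weight\<close>

definition bit_weight :: "bool \<Rightarrow> nat" where
  "bit_weight x = (if x then 1 else 2)"

definition word_weight :: "bool list \<Rightarrow> nat" where
  "word_weight xs = sum_list (map bit_weight xs)"

lemma word_weight_simps [simp]:
  "word_weight [] = 0"
  "word_weight (x # xs) = bit_weight x + word_weight xs"
  "word_weight (xs @ ys) = word_weight xs + word_weight ys"
  by (simp_all add: word_weight_def)

lemma length_le_word_weight: "length xs \<le> word_weight xs"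
  by (induction xs) (auto simp: bit_weight_def)

lemma word_weight_eq_0_iff: "word_weight xs = 0 \<longleftrightarrow> xs = []"
  by (cases xs) (auto simp: bit_weight_def)

lemma finite_word_weight_le: "finite {xs. word_weight xs \<le> K}"
proof (rule finite_subset)
  show "{xs. word_weight xs \<le> K} \<subseteq> {xs. set xs \<subseteq> UNIV \<and> length xs \<le> K}"
    using length_le_word_weight order_trans by blast
qed (rule finite_lists_length_le, simp)

lemma word_weight_le_set_eq:
  "{xs. word_weight xs \<le> K} =
     insert [] (Cons True ` {xs. word_weight xs + 1 \<le> K} \<union> Cons False ` {xs. word_weight xs + 2 \<le> K})"
  (is "?A = ?B")
proof (rule set_eqI)
  fix xs show "xs \<in> ?A \<longleftrightarrow> xs \<in> ?B"
    by (cases xs) (auto simp: bit_weight_def)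
qed

lemma card_word_weight_le_rec:
  "card {xs. word_weight xs \<le> K} =
     Suc (card {xs. word_weight xs + 1 \<le> K} + card {xs. word_weight xs + 2 \<le> K})"
proof -
  let ?T = "{xs. word_weight xs + 1 \<le> K}" and ?F = "{xs. word_weight xs + 2 \<le> K}"
  have fin: "finite ?T" "finite ?F"
    by (rule finite_subset[OF _ finite_word_weight_le[of K]], auto)+
  have "card (Cons True ` ?T \<union> Cons False ` ?F) = card ?T + card ?F"
    using fin by (subst card_Un_disjoint) (auto simp: card_image)
  then show ?thesis
    using fin by (subst word_weight_le_set_eq, subst card_insert_disjoint) auto
qed

theorem card_word_weight_le: "card {xs. word_weight xs \<le> K} + 1 = fib (K + 3)"
proof (induction K rule: fib.induct)
  case 1
  show ?case by (subst card_word_weight_le_rec) (simp add: numeral_eq_Suc)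
next
  case 2
  have "{xs. word_weight xs \<le> 0} = {[]}"
    by (auto simp: word_weight_eq_0_iff)
  then show ?case by (subst card_word_weight_le_rec) (simp add: numeral_eq_Suc)
next
  case (3 K)
  then show ?case by (subst card_word_weight_le_rec) (simp add: numeral_eq_Suc)
qed

lemma sum_bit_weight:
  "finite I \<Longrightarrow> (\<Sum>i\<in>I. bit_weight (b i)) = card I + card {i\<in>I. \<not> b i}"
proof (induction I rule: finite_induct)
  case (insert x I)
  then have "{i \<in> insert x I. \<not> b i} = (if b x then {i\<in>I. \<not> b i} else insert x {i\<in>I. \<not> b i})"
    by auto
  with insert show ?case
    by (simp add: bit_weight_def)
qed simp

lemma word_weight_map_upt: "word_weight (map b [a..<c]) = (\<Sum>i\<in>{a..<c}. bit_weight (b i))"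
  by (simp add: word_weight_def interv_sum_list_conv_sum_set_nat comp_def)

section \<open>Encoding admissible shifts of a 0-1 window\<close>

definition pairs_word :: "(bool \<times> bool) list \<Rightarrow> bool list" where
  "pairs_word ps = concat (map (\<lambda>(a, c). [a, c]) ps)"

lemma pairs_word_simps [simp]:
  "pairs_word [] = []"
  "pairs_word ((a, c) # ps) = a # c # pairs_word ps"
  by (simp_all add: pairs_word_def)

fun split_at_marker :: "bool list \<Rightarrow> (bool \<times> bool) list \<times> bool list" where
  "split_at_marker (True # False # r) = ([], r)"
| "split_at_marker (a # c # r) = (let (ps, t) = split_at_marker r in ((a, c) # ps, t))"
| "split_at_marker r = ([], r)"

lemma split_at_marker_pairs_word:
  "(True, False) \<notin> set ps \<Longrightarrow> split_at_marker (pairs_word ps @ True # False # r) = (ps, r)"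
proof (induction ps)
  case (Cons p ps)
  then show ?case by (cases p) (auto split: bool.split)
qed simp

definition admissible_shift :: "(nat \<Rightarrow> bool) \<Rightarrow> nat \<Rightarrow> nat \<Rightarrow> bool" where
  "admissible_shift b n P \<longleftrightarrow> 1 \<le> P \<and> P \<le> n \<and> b P \<and> \<not> b (n + 1 - P) \<and>
     (\<forall>i. 1 \<le> i \<longrightarrow> i + P \<le> n \<longrightarrow> b i \<longrightarrow> b (i + P))"

definition shift_pairs :: "(nat \<Rightarrow> bool) \<Rightarrow> nat \<Rightarrow> nat \<Rightarrow> (bool \<times> bool) list" where
  "shift_pairs b P k = map (\<lambda>i. (b i, b (i + P))) [1..<k]"

(* The marker [True, False] ends the pair list and also accounts for the two window positions
   fixed by admissibility: P and n + 1 - P if n + 1 - P < P, and P and 2 P otherwise (see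
   admissible_shift_long); the two-letter prefix tells the cases apart and balances the weight. *)
definition shift_code :: "(nat \<Rightarrow> bool) \<Rightarrow> nat \<Rightarrow> nat \<Rightarrow> bool list" where
  "shift_code b n P =
     (if n + 1 - P < P then
        [False, True] @ pairs_word (shift_pairs b P (n + 1 - P)) @ [True, False] @ map b [n + 2 - P..<P]
      else
        [True, True] @ pairs_word (shift_pairs b P P) @ [True, False] @ map b [2 * P + 1..<n + 1])"

lemma admissible_shift_no_marker:
  "admissible_shift b n P \<Longrightarrow> k + P \<le> n + 1 \<Longrightarrow> (True, False) \<notin> set (shift_pairs b P k)"
  by (auto simp: admissible_shift_def shift_pairs_def)

lemma admissible_shift_long:
  assumes "admissible_shift b n P" and "\<not> n + 1 - P < P"
  shows "2 * P \<le> n" and "b (2 * P)"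
proof -
  have "n + 1 - P \<noteq> P"
    using assms(1) by (metis admissible_shift_def)
  with assms show "2 * P \<le> n"
    unfolding admissible_shift_def by auto
  with assms(1) show "b (2 * P)"
    unfolding admissible_shift_def by (metis mult_2)
qed

lemma shift_pairs_eqD:
  "shift_pairs b P k = shift_pairs b' P k \<Longrightarrow> 1 \<le> i \<Longrightarrow> i < k \<Longrightarrow> b' i = b i \<and> b' (i + P) = b (i + P)"
  by (auto simp: shift_pairs_def map_eq_conv)

lemma shift_code_short_eqD:
  assumes adm: "admissible_shift b n P" "admissible_shift b' n' P'"
    and short: "n + 1 - P < P" "n' + 1 - P' < P'"
    and pairs: "shift_pairs b P (n + 1 - P) = shift_pairs b' P' (n' + 1 - P')"
    and tail: "map b [n + 2 - P..<P] = map b' [n' + 2 - P'..<P']"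
  shows "P' = P \<and> n' = n \<and> (\<forall>i\<in>{1..n}. b' i = b i)"
proof -
  define q where "q = n + 1 - P"
  have q: "1 \<le> q" "q + P = n + 1" "\<not> b q" "b P"
    using adm(1) unfolding admissible_shift_def q_def by auto
  have "length (shift_pairs b P q) = length (shift_pairs b' P' (n' + 1 - P'))"
    using pairs q_def by simp
  then have "n' + 1 - P' = q"
    using adm(2) q(1) unfolding admissible_shift_def shift_pairs_def by auto
  then have q': "n' + 1 - P' = q" "q + P' = n' + 1" "\<not> b' q" "b' P'"
    using adm(2) unfolding admissible_shift_def by auto
  have "length (map b [n + 2 - P..<P]) = length (map b' [n' + 2 - P'..<P'])"
    using tail by simp
  then have PP: "P' = P"
    using short q q' unfolding q_def by simp
  have nn: "n' = n"
    using q(2) q'(2) PP by simp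
  have "b' i = b i" if "1 \<le> i" "i \<le> n" for i
  proof -
    have "shift_pairs b P q = shift_pairs b' P q"
      using pairs q'(1) PP q_def by simp
    note pairsD = shift_pairs_eqD[OF this]
    consider "i < q" | "i = q" | "q < i" "i < P" | "i = P" | "P < i"
      by linarith
    then show ?thesis
    proof cases
      case 1
      then show ?thesis using pairsD that by blast
    next
      case 3
      then show ?thesis
        using tail[unfolded PP nn] q(2) by (auto simp: map_eq_conv)
    next
      case 5
      then show ?thesis
        using pairsD[of "i - P"] that q(2) by simp
    qed (use q q' PP in simp_all)
  qed
  then show ?thesis using PP nn by simp
qed

lemma shift_code_long_eqD:
  assumes adm: "admissible_shift b n P" "admissible_shift b' n' P'"
    and long: "\<not> n + 1 - P < P" "\<not> n' + 1 - P' < P'"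
    and pairs: "shift_pairs b P P = shift_pairs b' P' P'"
    and tail: "map b [2 * P + 1..<n + 1] = map b' [2 * P' + 1..<n' + 1]"
  shows "P' = P \<and> n' = n \<and> (\<forall>i\<in>{1..n}. b' i = b i)"
proof -
  have P: "1 \<le> P" "b P" "2 * P \<le> n" "b (2 * P)"
    using adm(1) admissible_shift_long[OF adm(1) long(1)] unfolding admissible_shift_def by auto
  have P': "1 \<le> P'" "b' P'" "2 * P' \<le> n'" "b' (2 * P')"
    using adm(2) admissible_shift_long[OF adm(2) long(2)] unfolding admissible_shift_def by auto
  have "length (shift_pairs b P P) = length (shift_pairs b' P' P')"
    using pairs by simp
  then have PP: "P' = P"
    using P(1) P'(1) unfolding shift_pairs_def by simp
  have "length (map b [2 * P + 1..<n + 1]) = length (map b' [2 * P' + 1..<n' + 1])"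
    using tail by simp
  then have nn: "n' = n"
    using P(3) P'(3) PP by (simp only: length_map length_upt)
  have "b' i = b i" if "1 \<le> i" "i \<le> n" for i
  proof -
    note pairsD = shift_pairs_eqD[OF pairs[unfolded PP, symmetric]]
    consider "i < P" | "i = P" | "P < i" "i < 2 * P" | "i = 2 * P" | "2 * P < i"
      by linarith
    then show ?thesis
    proof cases
      case 1
      then show ?thesis using pairsD that by blast
    next
      case 3
      then show ?thesis using pairsD[of "i - P"] by simp
    next
      case 5
      then show ?thesis
        using tail[unfolded PP nn] that by (auto simp: map_eq_conv)
    qed (use P P' PP in simp_all)
  qed
  then show ?thesis using PP nn by simp
qed

theorem shift_code_eqD:
  assumes adm: "admissible_shift b n P" "admissible_shift b' n' P'"
    and eq: "shift_code b n P = shift_code b' n' P'"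
  shows "P' = P \<and> n' = n \<and> (\<forall>i\<in>{1..n}. b' i = b i)"
proof -
  have "P \<le> n" "P' \<le> n'"
    using adm unfolding admissible_shift_def by auto
  note split = split_at_marker_pairs_word[OF admissible_shift_no_marker[OF adm(1)]]
    split_at_marker_pairs_word[OF admissible_shift_no_marker[OF adm(2)]]
  have eq_split: "split_at_marker (drop 2 (shift_code b n P)) = split_at_marker (drop 2 (shift_code b' n' P'))"
    using eq by simp
  show ?thesis
  proof (cases "n + 1 - P < P")
    case True
    then have "n' + 1 - P' < P'"
      using eq unfolding shift_code_def by (auto split: if_splits)
    with True eq_split show ?thesis
      using shift_code_short_eqD[OF adm True] split[of "n + 1 - P"] split[of "n' + 1 - P'"]
        \<open>P \<le> n\<close> \<open>P' \<le> n'\<close>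
      unfolding shift_code_def by simp
  next
    case False
    then have "\<not> n' + 1 - P' < P'"
      using eq unfolding shift_code_def by (auto split: if_splits)
    with False eq_split show ?thesis
      using shift_code_long_eqD[OF adm False] split[of P] split[of P']
        admissible_shift_long(1)[OF adm(1) False] admissible_shift_long(1)[OF adm(2)]
      unfolding shift_code_def by simp
  qed
qed

lemma word_weight_shift_pairs:
  "word_weight (pairs_word (shift_pairs b P k)) =
     (\<Sum>i\<in>{1..<k}. bit_weight (b i)) + (\<Sum>i\<in>{1 + P..<k + P}. bit_weight (b i))"
proof -
  have "word_weight (pairs_word (map (\<lambda>i. (b i, b (i + P))) xs)) =
      sum_list (map (\<lambda>i. bit_weight (b i) + bit_weight (b (i + P))) xs)" for xs
    by (induction xs) auto
  then show ?thesis
    by (simp add: shift_pairs_def interv_sum_list_conv_sum_set_nat sum.distrib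
        sum.shift_bounds_nat_ivl[where g = "\<lambda>i. bit_weight (b i)", symmetric])
qed

lemma sum_atLeastLessThan_split:
  "a \<le> j \<Longrightarrow> j < c \<Longrightarrow> sum f {a..<c} = sum f {a..<j} + f j + sum f {Suc j..<c}"
  by (metis sum.atLeastLessThan_concat sum.atLeast_Suc_lessThan add.assoc less_imp_le)

theorem word_weight_shift_code:
  assumes adm: "admissible_shift b n P"
  shows "word_weight (shift_code b n P) = (\<Sum>i\<in>{1..n}. bit_weight (b i)) + 3"
proof -
  let ?W = "\<lambda>a c. \<Sum>i\<in>{a..<c}. bit_weight (b i)"
  have P: "1 \<le> P" "P \<le> n" "b P" "\<not> b (n + 1 - P)"
    using adm unfolding admissible_shift_def by auto
  have "word_weight (shift_code b n P) = ?W 1 (n + 1) + 3"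
  proof (cases "n + 1 - P < P")
    case True
    define q where "q = n + 1 - P"
    have q: "1 \<le> q" "q < P" "q + P = n + 1" "\<not> b q" "n + 2 - P = Suc q"
      using P True unfolding q_def by auto
    have "?W 1 (n + 1) = ?W 1 q + bit_weight (b q) + ?W (Suc q) (n + 1)"
      using q by (intro sum_atLeastLessThan_split) auto
    also have "?W (Suc q) (n + 1) = ?W (Suc q) P + bit_weight (b P) + ?W (Suc P) (n + 1)"
      using q by (intro sum_atLeastLessThan_split) auto
    finally show ?thesis
      using True q P unfolding shift_code_def q_def[symmetric]
      by (simp add: word_weight_shift_pairs word_weight_map_upt bit_weight_def)
  next
    case False
    have P2: "2 * P \<le> n" "b (2 * P)"
      using admissible_shift_long[OF adm False] by auto
    have "?W 1 (n + 1) = ?W 1 P + bit_weight (b P) + ?W (Suc P) (n + 1)"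
      using P by (intro sum_atLeastLessThan_split) auto
    also have "?W (Suc P) (n + 1) = ?W (Suc P) (2 * P) + bit_weight (b (2 * P)) + ?W (Suc (2 * P)) (n + 1)"
      using P P2 by (intro sum_atLeastLessThan_split) auto
    finally show ?thesis
      using False P P2 unfolding shift_code_def
      by (simp add: word_weight_shift_pairs word_weight_map_upt bit_weight_def mult_2)
  qed
  then show ?thesis
    by (simp add: atLeastLessThanSuc_atLeastAtMost)
qed

section \<open>Windows of the semigroups in B(g)\<close>

lemma numerical_semigroupD:
  assumes "numerical_semigroup S"
  shows "0 \<in> S" "finite (gaps S)"
  using assms unfolding numerical_semigroup_def gaps_def by auto

lemma numerical_semigroup_multiplicity:
  assumes "numerical_semigroup S"
  shows "multiplicity_ns S \<in> S" "0 < multiplicity_ns S" "0 < x \<Longrightarrow> x < multiplicity_ns S \<Longrightarrow> x \<notin> S"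
proof -
  obtain s where "s \<notin> gaps S \<union> {0}"
    using numerical_semigroupD(2)[OF assms] ex_new_if_finite[OF infinite_UNIV_nat] by blast
  then have "s \<in> S \<and> s \<noteq> 0"
    unfolding gaps_def by auto
  then show "multiplicity_ns S \<in> S" "0 < multiplicity_ns S"
    using LeastI[of "\<lambda>s. s \<in> S \<and> s \<noteq> 0"] unfolding multiplicity_ns_def by auto
  show "0 < x \<Longrightarrow> x < multiplicity_ns S \<Longrightarrow> x \<notin> S"
    using not_less_Least[of x "\<lambda>s. s \<in> S \<and> s \<noteq> 0"] unfolding multiplicity_ns_def by auto
qed

lemma frobenius_eq_Max: "gaps S \<noteq> {} \<Longrightarrow> frobenius S = int (Max (gaps S))"
  by (simp add: frobenius_def)

lemma Max_gaps_notin: "numerical_semigroup S \<Longrightarrow> gaps S \<noteq> {} \<Longrightarrow> Max (gaps S) \<notin> S"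
  using Max_in numerical_semigroupD(2) unfolding gaps_def by blast

lemma frobenius_notin:
  assumes "numerical_semigroup S" and "0 \<le> frobenius S"
  shows "nat (frobenius S) \<notin> S"
proof -
  have "gaps S \<noteq> {}"
    using assms(2) unfolding frobenius_def by auto
  then show ?thesis
    using Max_gaps_notin[OF assms(1)] frobenius_eq_Max by simp
qed

lemma le_frobenius:
  assumes "numerical_semigroup S" and "x \<notin> S"
  shows "int x \<le> frobenius S"
proof -
  have "x \<in> gaps S"
    using assms(2) unfolding gaps_def by simp
  then have "frobenius S = int (Max (gaps S))"
    by (intro frobenius_eq_Max) auto
  moreover have "x \<le> Max (gaps S)"
    using Max_ge[OF numerical_semigroupD(2)[OF assms(1)] \<open>x \<in> gaps S\<close>] .
  ultimately show ?thesis
    by simp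
qed

definition small_pseudo_frobenius :: "nat set \<Rightarrow> nat set" where
  "small_pseudo_frobenius S =
     {P \<in> pseudo_frobenius S. int P \<le> frobenius S - int (multiplicity_ns S)}"

lemma finite_small_pseudo_frobenius:
  "numerical_semigroup S \<Longrightarrow> finite (small_pseudo_frobenius S)"
  using numerical_semigroupD(2) unfolding small_pseudo_frobenius_def pseudo_frobenius_def
  by (rule finite_subset[rotated]) auto

lemma t2_le_card_small_pseudo_frobenius:
  assumes "numerical_semigroup S"
  shows "t2 S \<le> int (card (small_pseudo_frobenius S))"
proof -
  let ?T = "{h \<in> gaps S. frobenius S - int (multiplicity_ns S) + 1 \<le> int h \<and> int h \<le> frobenius S}"
  have fin: "finite (gaps S)"
    using numerical_semigroupD(2)[OF assms] .
  have "pseudo_frobenius S \<subseteq> small_pseudo_frobenius S \<union> ?T"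
    using le_frobenius[OF assms] unfolding small_pseudo_frobenius_def pseudo_frobenius_def gaps_def
    by auto
  moreover have "finite (small_pseudo_frobenius S \<union> ?T)"
    using fin unfolding small_pseudo_frobenius_def pseudo_frobenius_def by auto
  ultimately have "card (pseudo_frobenius S) \<le> card (small_pseudo_frobenius S \<union> ?T)"
    by (rule card_mono[rotated])
  then have "card (pseudo_frobenius S) \<le> card (small_pseudo_frobenius S) + card ?T"
    using card_Un_le order_trans by blast
  then show ?thesis
    unfolding t2_def type_ns_def t1_def by linarith
qed

definition window_length :: "nat set \<Rightarrow> nat" where
  "window_length S = nat (frobenius S) - multiplicity_ns S - 1"

definition window :: "nat set \<Rightarrow> nat \<Rightarrow> bool" where
  "window S i \<longleftrightarrow> multiplicity_ns S + i \<in> S"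

lemma frobenius_window_length:
  assumes S: "numerical_semigroup S" and mF: "int (multiplicity_ns S) < frobenius S"
  shows "frobenius S = int (multiplicity_ns S + window_length S + 1)"
proof -
  have "nat (frobenius S) \<notin> S"
    using frobenius_notin[OF S] mF by simp
  then have "nat (frobenius S) \<noteq> multiplicity_ns S"
    using numerical_semigroup_multiplicity(1)[OF S] by auto
  then show ?thesis
    using mF unfolding window_length_def by linarith
qed

lemma mem_iff_window:
  assumes S: "numerical_semigroup S" and mF: "int (multiplicity_ns S) < frobenius S"
  shows "x \<in> S \<longleftrightarrow>
    x = 0 \<or> x = multiplicity_ns S \<or>
    (multiplicity_ns S < x \<and> x \<le> multiplicity_ns S + window_length S \<and> window S (x - multiplicity_ns S)) \<or>
    multiplicity_ns S + window_length S + 1 < x"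
proof -
  define m where "m = multiplicity_ns S"
  define F where "F = m + window_length S + 1"
  have F: "frobenius S = int F"
    using frobenius_window_length[OF S mF] unfolding F_def m_def .
  have "F \<notin> S"
    using frobenius_notin[OF S] F by simp
  moreover have "F < x \<Longrightarrow> x \<in> S"
    using le_frobenius[OF S, of x] F by auto
  moreover have "0 < x \<Longrightarrow> x < m \<Longrightarrow> x \<notin> S"
    using numerical_semigroup_multiplicity(3)[OF S] unfolding m_def by blast
  ultimately show ?thesis
    using numerical_semigroupD(1)[OF S] numerical_semigroup_multiplicity(1)[OF S] F_def
    unfolding m_def[symmetric] window_def
    by (cases "x < m"; cases "x = m"; cases "x < F"; cases "x = F") auto
qed

lemma genus_window:
  assumes S: "numerical_semigroup S" and mF: "int (multiplicity_ns S) < frobenius S"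
  shows "genus S = multiplicity_ns S + card {i \<in> {1..window_length S}. \<not> window S i}"
proof -
  define m where "m = multiplicity_ns S"
  define n where "n = window_length S"
  have m: "0 < m"
    using numerical_semigroup_multiplicity(2)[OF S] unfolding m_def .
  have "gaps S = {1..<m} \<union> (+) m ` {i \<in> {1..n}. \<not> window S i} \<union> {m + n + 1}"
  proof (rule set_eqI)
    fix x
    have "x \<in> (+) m ` {i \<in> {1..n}. \<not> window S i} \<longleftrightarrow>
        m < x \<and> x \<le> m + n \<and> \<not> window S (x - m)"
      by (auto simp: image_iff) (intro exI[of _ "x - m"]; auto)
    then show "x \<in> gaps S \<longleftrightarrow> x \<in> {1..<m} \<union> (+) m ` {i \<in> {1..n}. \<not> window S i} \<union> {m + n + 1}"
      using mem_iff_window[OF S mF, of x] m unfolding gaps_def m_def[symmetric] n_def[symmetric]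
      by auto
  qed
  moreover have "card ({1..<m} \<union> (+) m ` {i \<in> {1..n}. \<not> window S i} \<union> {m + n + 1}) =
      (m - 1) + card {i \<in> {1..n}. \<not> window S i} + 1"
    by (subst card_Un_disjoint; auto simp: card_Un_disjoint card_image)+
  ultimately show ?thesis
    using m unfolding genus_def m_def n_def by simp
qed

lemma small_pseudo_frobeniusD:
  assumes S: "numerical_semigroup S" and P: "P \<in> small_pseudo_frobenius S"
  shows "1 \<le> P" and "multiplicity_ns S + P \<in> S" and "int (multiplicity_ns S + P) < frobenius S"
    and "s \<in> S \<Longrightarrow> s \<noteq> 0 \<Longrightarrow> P + s \<in> S"
proof -
  have "P \<notin> S" and PF: "\<And>s. s \<in> S \<Longrightarrow> s \<noteq> 0 \<Longrightarrow> P + s \<in> S"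
    and le: "int (multiplicity_ns S + P) \<le> frobenius S"
    using P unfolding small_pseudo_frobenius_def pseudo_frobenius_def gaps_def by auto
  then show "1 \<le> P"
    using numerical_semigroupD(1)[OF S] by (cases P) auto
  show mP: "multiplicity_ns S + P \<in> S"
    using PF[of "multiplicity_ns S"] numerical_semigroup_multiplicity(1,2)[OF S] by (simp add: add.commute)
  moreover have "int (multiplicity_ns S + P) \<noteq> frobenius S"
  proof
    assume eq: "int (multiplicity_ns S + P) = frobenius S"
    then have "nat (frobenius S) \<notin> S"
      using frobenius_notin[OF S] by simp
    with eq mP show False
      by (metis nat_int)
  qed
  ultimately show "int (multiplicity_ns S + P) < frobenius S"
    using le by simp
  show "s \<in> S \<Longrightarrow> s \<noteq> 0 \<Longrightarrow> P + s \<in> S"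
    by (rule PF)
qed

lemma small_pseudo_frobenius_multiplicity_less:
  "numerical_semigroup S \<Longrightarrow> P \<in> small_pseudo_frobenius S \<Longrightarrow> int (multiplicity_ns S) < frobenius S"
  using small_pseudo_frobeniusD(3) by fastforce

lemma admissible_shift_window:
  assumes S: "numerical_semigroup S" and P: "P \<in> small_pseudo_frobenius S"
  shows "admissible_shift (window S) (window_length S) P"
proof -
  define m where "m = multiplicity_ns S"
  define n where "n = window_length S"
  have F: "frobenius S = int (m + n + 1)"
    using frobenius_window_length[OF S small_pseudo_frobenius_multiplicity_less[OF S P]]
    unfolding m_def n_def .
  note PD = small_pseudo_frobeniusD[OF S P, folded m_def]
  have "P \<le> n"
    using PD(3) F by simp
  moreover have "\<not> window S (n + 1 - P)"
  proof
    assume "window S (n + 1 - P)"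
    then have "P + (m + (n + 1 - P)) \<in> S"
      using PD(4) numerical_semigroup_multiplicity(2)[OF S] unfolding window_def m_def by simp
    moreover have "nat (frobenius S) = m + n + 1"
      using F by simp
    ultimately show False
      using frobenius_notin[OF S] F \<open>P \<le> n\<close> by simp
  qed
  moreover have "window S (i + P)" if "window S i" for i
    using PD(4)[of "m + i"] that numerical_semigroup_multiplicity(2)[OF S] unfolding window_def m_def
    by (simp add: ac_simps)
  ultimately show ?thesis
    using PD(1,2) unfolding admissible_shift_def window_def m_def n_def by blast
qed

lemma B_set_window_length_le:
  assumes "S \<in> B_set g" and "int (multiplicity_ns S) < frobenius S"
  shows "window_length S + 2 \<le> multiplicity_ns S"
  using assms frobenius_window_length[of S] unfolding B_set_def by auto

lemma B_set_eq_if_window_eq: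
  assumes S: "S \<in> B_set g" "int (multiplicity_ns S) < frobenius S"
    and S': "S' \<in> B_set g" "int (multiplicity_ns S') < frobenius S'"
    and n: "window_length S' = window_length S"
    and w: "\<forall>i\<in>{1..window_length S}. window S' i = window S i"
  shows "S' = S"
proof -
  have ns: "numerical_semigroup S" "numerical_semigroup S'" and g: "genus S = g" "genus S' = g"
    using S S' unfolding B_set_def by auto
  have "{i \<in> {1..window_length S'}. \<not> window S' i} = {i \<in> {1..window_length S}. \<not> window S i}"
    using n w by auto
  then have m: "multiplicity_ns S' = multiplicity_ns S"
    using genus_window[OF ns(1) S(2)] genus_window[OF ns(2) S'(2)] g by simp
  show ?thesis
  proof (rule set_eqI)
    fix x
    have "window S' (x - multiplicity_ns S) = window S (x - multiplicity_ns S)"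
      if "multiplicity_ns S < x" "x \<le> multiplicity_ns S + window_length S"
    proof -
      have "x - multiplicity_ns S \<in> {1..window_length S}"
        using that by auto
      then show ?thesis
        using w by blast
    qed
    then show "x \<in> S' \<longleftrightarrow> x \<in> S"
      unfolding mem_iff_window[OF ns(1) S(2)] mem_iff_window[OF ns(2) S'(2)] m n
      by blast
  qed
qed

definition semigroup_code :: "nat set \<Rightarrow> nat \<Rightarrow> bool list" where
  "semigroup_code S P = shift_code (window S) (window_length S) P"

lemma inj_on_semigroup_code:
  "inj_on (\<lambda>(S, P). semigroup_code S P) (Sigma (B_set g) small_pseudo_frobenius)"
proof (rule inj_onI, clarify)
  fix S P S' P'
  assume S: "S \<in> B_set g" "P \<in> small_pseudo_frobenius S"
    and S': "S' \<in> B_set g" "P' \<in> small_pseudo_frobenius S'"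
    and eq: "semigroup_code S P = semigroup_code S' P'"
  have ns: "numerical_semigroup S" "numerical_semigroup S'"
    using S(1) S'(1) unfolding B_set_def by auto
  have "P' = P \<and> window_length S' = window_length S \<and>
      (\<forall>i\<in>{1..window_length S}. window S' i = window S i)"
    using shift_code_eqD[OF admissible_shift_window[OF ns(1) S(2)] admissible_shift_window[OF ns(2) S'(2)]]
      eq unfolding semigroup_code_def by blast
  moreover have "S' = S"
    using B_set_eq_if_window_eq[OF S(1) small_pseudo_frobenius_multiplicity_less[OF ns(1) S(2)]
        S'(1) small_pseudo_frobenius_multiplicity_less[OF ns(2) S'(2)]] calculation
    by blast
  ultimately show "S = S' \<and> P = P'"
    by simp
qed

lemma word_weight_semigroup_code:
  assumes S: "S \<in> B_set g" and P: "P \<in> small_pseudo_frobenius S"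
  shows "word_weight (semigroup_code S P) \<le> g + 1"
proof -
  have ns: "numerical_semigroup S" and g: "genus S = g"
    using S unfolding B_set_def by auto
  note mF = small_pseudo_frobenius_multiplicity_less[OF ns P]
  have "word_weight (semigroup_code S P) =
      window_length S + card {i \<in> {1..window_length S}. \<not> window S i} + 3"
    unfolding semigroup_code_def word_weight_shift_code[OF admissible_shift_window[OF ns P]]
    by (simp add: sum_bit_weight)
  then show ?thesis
    using genus_window[OF ns mF] B_set_window_length_le[OF S mF] g by simp
qed

theorem lemma5p1:
  fixes g :: nat
  shows "(\<Sum>S\<in>B_set g. t2 S) \<le> int (fib (g + 4))"
proof (cases "finite (B_set g)")
  case True
  have ns: "S \<in> B_set g \<Longrightarrow> numerical_semigroup S" for S
    unfolding B_set_def by simp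
  have "(\<Sum>S\<in>B_set g. t2 S) \<le> (\<Sum>S\<in>B_set g. int (card (small_pseudo_frobenius S)))"
    by (rule sum_mono) (simp add: ns t2_le_card_small_pseudo_frobenius)
  also have "\<dots> = int (card (Sigma (B_set g) small_pseudo_frobenius))"
    by (simp add: card_SigmaI True ns finite_small_pseudo_frobenius)
  also have "card (Sigma (B_set g) small_pseudo_frobenius) \<le> card {xs. word_weight xs \<le> g + 1}"
    by (rule card_inj_on_le[OF inj_on_semigroup_code _ finite_word_weight_le])
       (auto dest: word_weight_semigroup_code)
  also have "card {xs. word_weight xs \<le> g + 1} < fib (g + 4)"
    using card_word_weight_le[of "g + 1"] by (simp add: numeral_eq_Suc)
  finally show ?thesis
    by simp
qed simp

end
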